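(* Let $\mathcal X=\{1,\ldots,n\}$ be the vertex set of a directed graph with edge energies $U_{ij}\in[0,+\infty]$ (with $U_{ij}=+\infty$ allowed for absent links), and let $B=[b_{ij}]$, $b_{ij}=\exp(-U_{ij})$ (with $\exp(-\infty)=0$). Let $N\ge1$ be such that all entries of $B^N$ are positive, let $\lambda_B$ be the spectral radius of $B$, and let $u,v$ be vectors with positive entries such that $B^Tu=\lambda_Bu$, $Bv=\lambda_Bv$, $\sum_iu_iv_i=1$. Set $\mu_U(i)=u_iv_i$, $R_U=\lambda_B^{-1}\operatorname{diag}(v)^{-1}B\operatorname{diag}(v)$ with entries $(R_U)_{ij}$, and $\mathfrak M_U(x_0,\ldots,x_N)=\mu_U(x_0)(R_U)_{x_0x_1}\cdots(R_U)_{x_{N-1}x_N}$. Let $\mathfrak M^*_U[\delta_1,\delta_n]$ be the minimizer of $\mathbb D(P\|\mathfrak M_U)$ over all probability distributions $P$ on $\mathcal X^{N+1}$ whose marginal at time $0$ is the point mass at node $1$ and whose marginal at time $N$ is the point mass at node $n$. For a path $x=(x_0,\ldots,x_N)$ define its cost $\sum_{t=0}^{N-1}U_{x_tx_{t+1}}$. Then $\mathfrak M^*_U[\delta_1,\delta_n]$ assigns equal probability to any two paths $x\in\mathcal X^{N+1}$ with $x_0=1$, $x_N=n$ having equal cost; in particular, it assigns maximum and equal probability to the minimum-cost paths from $1$ to $n$ of length $N$.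
   Context: Relative entropy of a probability distribution $P$ with respect to a nonnegative measure $Q$ on a finite set: $\mathbb D(P\|Q)=\sum_x P(x)\log\frac{P(x)}{Q(x)}$ if $\mathrm{supp}(P)\subseteq\mathrm{supp}(Q)$ (with $0\log0=0$), and $+\infty$ otherwise. *)

theory Defs
  imports "Jordan_Normal_Form.Spectral_Radius" "HOL-Library.Extended_Real"
begin

definition bmat :: "(nat \<Rightarrow> nat \<Rightarrow> ereal) \<Rightarrow> nat \<Rightarrow> nat \<Rightarrow> real" where
  "bmat U i j = (if U i j = \<infinity> then 0 else exp (- real_of_ereal (U i j)))"

text \<open>B as an n x n complex matrix (index shift: row i of mat = vertex i+1).\<close>
definition Bmat_c :: "nat \<Rightarrow> (nat \<Rightarrow> nat \<Rightarrow> real) \<Rightarrow> complex mat" where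
  "Bmat_c n b = mat n n (\<lambda>(i,j). complex_of_real (b (Suc i) (Suc j)))"

fun mpow :: "nat \<Rightarrow> (nat \<Rightarrow> nat \<Rightarrow> real) \<Rightarrow> nat \<Rightarrow> nat \<Rightarrow> nat \<Rightarrow> real" where
  "mpow n b 0 i j = (if i = j then 1 else 0)"
| "mpow n b (Suc k) i j = (\<Sum>l = 1..n. mpow n b k i l * b l j)"

definition paths :: "nat \<Rightarrow> nat \<Rightarrow> nat list set" where
  "paths n N = {xs. length xs = Suc N \<and> set xs \<subseteq> {1..n}}"

definition is_prob :: "nat list set \<Rightarrow> (nat list \<Rightarrow> real) \<Rightarrow> bool" where
  "is_prob S P \<longleftrightarrow> (\<forall>x\<in>S. P x \<ge> 0) \<and> (\<Sum>x\<in>S. P x) = 1"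

definition marginal :: "nat \<Rightarrow> nat \<Rightarrow> (nat list \<Rightarrow> real) \<Rightarrow> nat \<Rightarrow> nat \<Rightarrow> real" where
  "marginal n N P t i = (\<Sum>xs\<in>{xs\<in>paths n N. xs ! t = i}. P xs)"

definition rel_entropy :: "'a set \<Rightarrow> ('a \<Rightarrow> real) \<Rightarrow> ('a \<Rightarrow> real) \<Rightarrow> ereal" where
  "rel_entropy S P Q =
     (if (\<forall>x\<in>S. P x \<noteq> 0 \<longrightarrow> Q x \<noteq> 0)
      then ereal (\<Sum>x\<in>S. if P x = 0 then 0 else P x * ln (P x / Q x))
      else \<infinity>)"

definition markov_meas ::
  "(nat \<Rightarrow> nat \<Rightarrow> real) \<Rightarrow> real \<Rightarrow> (nat \<Rightarrow> real) \<Rightarrow> (nat \<Rightarrow> real) \<Rightarrow> nat \<Rightarrow> nat list \<Rightarrow> real" where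
  "markov_meas b lam u v N xs =
     u (xs ! 0) * v (xs ! 0) *
     (\<Prod>t<N. inverse lam * inverse (v (xs ! t)) * b (xs ! t) (xs ! Suc t) * v (xs ! Suc t))"

definition path_cost :: "(nat \<Rightarrow> nat \<Rightarrow> ereal) \<Rightarrow> nat \<Rightarrow> nat list \<Rightarrow> ereal" where
  "path_cost U N xs = (\<Sum>t<N. U (xs ! t) (xs ! Suc t))"

end

theory Submission
  imports Defs
begin

text \<open>On a bridge \<open>x\<close> from \<open>1\<close> to \<open>n\<close> the factors \<open>v(x\<^sub>t)\<^sup>-\<^sup>1 v(x\<^sub>t\<^sub>+\<^sub>1)\<close> of the Markov
  measure telescope, so \<open>M\<^sub>U(x) = u\<^sub>1 v\<^sub>n \<lambda>\<^sub>B\<^sup>-\<^sup>N exp (-cost x)\<close>. Every feasible \<open>P\<close> lives on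
  the bridges, hence \<open>D(P\<parallel>M\<^sub>U) = D(P\<parallel>Q) + const\<close> for the normalisation \<open>Q\<close> of
  \<open>exp (-cost)\<close> on the bridges. Since \<open>Q\<close> is itself feasible, Gibbs' inequality forces the
  minimiser to be \<open>Q\<close>, a decreasing function of the cost. Only the positivity of \<open>u\<close>, \<open>v\<close>
  and \<open>\<lambda>\<^sub>B\<close> enters.\<close>

section \<open>Relative entropy\<close>

lemma entropy_term_ge_diff:
  fixes p q :: real
  assumes "p \<ge> 0" "q \<ge> 0" "p \<noteq> 0 \<longrightarrow> q \<noteq> 0"
  shows "p - q \<le> (if p = 0 then 0 else p * ln (p / q))"
    and "(if p = 0 then 0 else p * ln (p / q)) = p - q \<longleftrightarrow> p = q"
proof -
  have "p - q \<le> p * ln (p / q) \<and> (p * ln (p / q) = p - q \<longleftrightarrow> p = q)" if "p > 0" "q > 0"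
  proof -
    have ln_pq: "p * ln (p / q) = - (p * ln (q / p))"
      using that by (simp add: ln_div algebra_simps)
    have "p * ln (q / p) \<le> p * (q / p - 1)"
      using that by (intro mult_left_mono ln_le_minus_one) auto
    also have "\<dots> = q - p"
      using that by (simp add: field_simps)
    finally have le: "p * ln (q / p) \<le> q - p" .
    have "p = q" if "p * ln (q / p) = q - p"
    proof -
      have "ln (q / p) = q / p - 1"
        using that \<open>p > 0\<close> by (simp add: field_simps)
      then have "q / p = 1"
        using \<open>p > 0\<close> \<open>q > 0\<close> by (intro ln_eq_minus_one) auto
      then show ?thesis
        using \<open>p > 0\<close> by simp
    qed
    then show ?thesis
      using le ln_pq by auto
  qed
  then show "p - q \<le> (if p = 0 then 0 else p * ln (p / q))"
    and "(if p = 0 then 0 else p * ln (p / q)) = p - q \<longleftrightarrow> p = q"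
    using assms by (auto simp: less_le)
qed

lemma rel_entropy_self: "rel_entropy S P P = 0"
  by (simp add: rel_entropy_def zero_ereal_def)

lemma rel_entropy_cong:
  assumes "\<forall>x\<in>S. P x \<noteq> 0 \<longrightarrow> Q x = Q' x"
  shows "rel_entropy S P Q = rel_entropy S P Q'"
proof -
  have "(\<Sum>x\<in>S. if P x = 0 then 0 else P x * ln (P x / Q x))
      = (\<Sum>x\<in>S. if P x = 0 then 0 else P x * ln (P x / Q' x))"
    using assms by (intro sum.cong) auto
  with assms show ?thesis
    by (auto simp: rel_entropy_def)
qed

lemma rel_entropy_scale:
  fixes a :: real
  assumes "a > 0" "\<forall>x\<in>S. P x \<ge> 0" "\<forall>x\<in>S. Q x \<ge> 0" "(\<Sum>x\<in>S. P x) = 1"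
  shows "rel_entropy S P (\<lambda>x. a * Q x) = rel_entropy S P Q - ereal (ln a)"
proof (cases "\<forall>x\<in>S. P x \<noteq> 0 \<longrightarrow> Q x \<noteq> 0")
  case True
  have "(\<Sum>x\<in>S. if P x = 0 then 0 else P x * ln (P x / (a * Q x)))
      = (\<Sum>x\<in>S. (if P x = 0 then 0 else P x * ln (P x / Q x)) - P x * ln a)"
  proof (rule sum.cong)
    fix x assume "x \<in> S"
    then have "P x \<noteq> 0 \<Longrightarrow> P x > 0 \<and> Q x > 0"
      using assms True by (auto simp: less_le)
    then show "(if P x = 0 then 0 else P x * ln (P x / (a * Q x)))
        = (if P x = 0 then 0 else P x * ln (P x / Q x)) - P x * ln a"
      using \<open>a > 0\<close> by (auto simp: ln_div ln_mult algebra_simps)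
  qed simp
  also have "\<dots> = (\<Sum>x\<in>S. if P x = 0 then 0 else P x * ln (P x / Q x)) - ln a"
    using assms(4) by (simp add: sum_subtractf sum_distrib_right[symmetric])
  finally show ?thesis
    using True \<open>a > 0\<close> by (simp add: rel_entropy_def)
qed (use assms(1) in \<open>auto simp: rel_entropy_def\<close>)

lemma rel_entropy_nonpos_imp_eq:
  assumes "finite S"
    and "\<forall>x\<in>S. P x \<ge> 0" "(\<Sum>x\<in>S. P x) = 1"
    and "\<forall>x\<in>S. Q x \<ge> 0" "(\<Sum>x\<in>S. Q x) = 1"
    and "rel_entropy S P Q \<le> 0"
  shows "\<forall>x\<in>S. P x = Q x"
proof -
  define g where "g x = (if P x = 0 then 0 else P x * ln (P x / Q x)) - (P x - Q x)" for x
  have supp: "\<forall>x\<in>S. P x \<noteq> 0 \<longrightarrow> Q x \<noteq> 0"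
    using assms(6) by (auto simp: rel_entropy_def split: if_splits)
  have g_nonneg: "\<forall>x\<in>S. g x \<ge> 0"
    using entropy_term_ge_diff(1) assms(2,4) supp by (simp add: g_def)
  have "(\<Sum>x\<in>S. g x) = (\<Sum>x\<in>S. if P x = 0 then 0 else P x * ln (P x / Q x))"
    using assms(3,5) by (simp add: g_def sum_subtractf)
  also have "\<dots> \<le> 0"
    using assms(6) supp by (simp add: rel_entropy_def)
  finally have "\<forall>x\<in>S. g x = 0"
    using sum_nonneg_eq_0_iff[OF assms(1)] g_nonneg by (metis antisym sum_nonneg)
  then show ?thesis
    using entropy_term_ge_diff(2) assms(2,4) supp by (simp add: g_def)
qed

lemma sum_normalized:
  fixes w :: "'a \<Rightarrow> real"
  assumes "finite S" "A \<subseteq> S" "sum w A \<noteq> 0"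
  shows "(\<Sum>x\<in>S. if x \<in> A then w x / sum w A else 0) = 1"
proof -
  have "(\<Sum>x\<in>S. if x \<in> A then w x / sum w A else 0) = (\<Sum>x\<in>A. w x / sum w A)"
    using assms(1,2) by (simp add: sum.If_cases Int_absorb1)
  also have "\<dots> = 1"
    using assms(3) by (simp add: sum_divide_distrib[symmetric])
  finally show ?thesis .
qed

text \<open>For distributions carried by \<open>A\<close>, \<open>D(P\<parallel>M) = D(P\<parallel>Q) - ln (c \<cdot> \<Sum>\<^sub>A w)\<close>.\<close>
lemma rel_entropy_minimizer_eq_normalized:
  fixes S A :: "'a set" and M w P :: "'a \<Rightarrow> real" and c :: real
  defines "Q \<equiv> \<lambda>x. if x \<in> A then w x / sum w A else 0"
  assumes "finite S" "A \<subseteq> S"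
    and "c > 0" "\<forall>x\<in>A. w x \<ge> 0" "sum w A > 0" "\<forall>x\<in>A. M x = c * w x"
    and "\<forall>x\<in>S. P x \<ge> 0" "(\<Sum>x\<in>S. P x) = 1" "\<forall>x\<in>S - A. P x = 0"
    and "rel_entropy S P M \<le> rel_entropy S Q M"
  shows "\<forall>x\<in>S. P x = Q x"
proof -
  define a where "a = c * sum w A"
  have "a > 0"
    using assms(4,6) by (simp add: a_def)
  have Q_nonneg: "\<forall>x\<in>S. Q x \<ge> 0"
    using assms(5,6) by (simp add: Q_def)
  have Q_sum: "(\<Sum>x\<in>S. Q x) = 1"
    unfolding Q_def using sum_normalized assms(2,3,6) by (metis less_irrefl)
  have M_eq: "M x = a * Q x" if "x \<in> A" for x
    using that assms(6,7) by (simp add: Q_def a_def)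
  have shift: "rel_entropy S R M = rel_entropy S R Q - ereal (ln a)"
    if "\<forall>x\<in>S. R x \<ge> 0" "(\<Sum>x\<in>S. R x) = 1" "\<forall>x\<in>S - A. R x = 0" for R
  proof -
    have "rel_entropy S R M = rel_entropy S R (\<lambda>x. a * Q x)"
      using that(3) M_eq by (intro rel_entropy_cong) blast
    also have "\<dots> = rel_entropy S R Q - ereal (ln a)"
      using rel_entropy_scale \<open>a > 0\<close> that(1,2) Q_nonneg by blast
    finally show ?thesis .
  qed
  have "rel_entropy S P Q - ereal (ln a) \<le> rel_entropy S Q Q - ereal (ln a)"
    using assms(8-11) Q_nonneg Q_sum shift[of P] shift[of Q] by (simp add: Q_def)
  then have "rel_entropy S P Q \<le> 0"
    by (cases "rel_entropy S P Q") (auto simp: rel_entropy_self)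
  then show ?thesis
    using rel_entropy_nonpos_imp_eq assms(2,8,9) Q_nonneg Q_sum by blast
qed

section \<open>Paths and their weights\<close>

lemma finite_paths: "finite (paths n N)"
proof -
  have "paths n N = {xs. set xs \<subseteq> {1..n} \<and> length xs = Suc N}"
    by (auto simp: paths_def)
  then show ?thesis
    using finite_lists_length_eq[of "{1..n}" "Suc N"] by simp
qed

lemma paths_nth_in:
  assumes "xs \<in> paths n N" "t \<le> N"
  shows "xs ! t \<in> {1..n}"
proof -
  have "xs ! t \<in> set xs"
    using assms by (intro nth_mem) (simp add: paths_def)
  then show ?thesis
    using assms(1) by (auto simp: paths_def)
qed

definition path_weight :: "(nat \<Rightarrow> nat \<Rightarrow> real) \<Rightarrow> nat \<Rightarrow> nat list \<Rightarrow> real" where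
  "path_weight b N xs = (\<Prod>t<N. b (xs ! t) (xs ! Suc t))"

lemma path_weight_nonneg: "\<forall>i j. b i j \<ge> 0 \<Longrightarrow> path_weight b N xs \<ge> 0"
  by (simp add: path_weight_def prod_nonneg)

text \<open>The weights \<open>v\<close> of the Doob transform telescope along a path.\<close>
lemma markov_meas_eq_path_weight:
  assumes "\<forall>t\<le>N. v (xs ! t) \<noteq> 0"
  shows "markov_meas b lam u v N xs
           = u (xs ! 0) * v (xs ! N) * inverse lam ^ N * path_weight b N xs"
proof -
  have "markov_meas b lam u v N xs = u (xs ! 0) * v (xs ! 0) *
          (\<Prod>t<N. inverse lam * (b (xs ! t) (xs ! Suc t) * (v (xs ! Suc t) / v (xs ! t))))"
    unfolding markov_meas_def
    by (intro arg_cong[where f = "(*) _"] prod.cong) (simp_all add: field_simps)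
  also have "\<dots> = u (xs ! 0) * v (xs ! 0) *
          (inverse lam ^ N * (path_weight b N xs * (\<Prod>t<N. v (xs ! Suc t) / v (xs ! t))))"
    by (simp only: prod.distrib prod_constant card_lessThan path_weight_def)
  also have "(\<Prod>t<N. v (xs ! Suc t) / v (xs ! t)) = v (xs ! N) / v (xs ! 0)"
    using assms by (intro prod_lessThan_telescope) auto
  finally show ?thesis
    using assms by simp
qed

lemma mpow_nonneg: "\<forall>i j. b i j \<ge> 0 \<Longrightarrow> mpow n b k i j \<ge> 0"
  by (induction k arbitrary: j) (auto intro!: sum_nonneg)

lemma mpow_Suc_pos_imp_edge:
  assumes "\<forall>i j. b i j \<ge> 0" "mpow n b (Suc k) i j > 0"
  shows "\<exists>l\<in>{1..n}. mpow n b k i l > 0 \<and> b l j > 0"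
proof -
  have "(\<Sum>l=1..n. mpow n b k i l * b l j) \<noteq> 0"
    using assms(2) by simp
  then obtain l where "l \<in> {1..n}" "mpow n b k i l * b l j \<noteq> 0"
    by (meson sum.neutral)
  then show ?thesis
    using mpow_nonneg[OF assms(1)] assms(1) by (auto simp: less_le)
qed

lemma mpow_pos_imp_path:
  assumes "\<forall>i j. b i j \<ge> 0" "i \<in> {1..n}" "j \<in> {1..n}" "mpow n b k i j > 0"
  shows "\<exists>xs\<in>paths n k. xs ! 0 = i \<and> xs ! k = j \<and> path_weight b k xs > 0"
  using assms(3,4)
proof (induction k arbitrary: j)
  case 0
  then show ?case
    using assms(2) by (intro bexI[of _ "[i]"]) (auto simp: paths_def path_weight_def split: if_splits)
next
  case (Suc k)
  obtain l where l: "l \<in> {1..n}" "mpow n b k i l > 0" "b l j > 0"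
    using mpow_Suc_pos_imp_edge[OF assms(1) Suc.prems(2)] by blast
  then obtain xs where xs: "xs \<in> paths n k" "xs ! 0 = i" "xs ! k = l" "path_weight b k xs > 0"
    using Suc.IH by blast
  have len: "length xs = Suc k"
    using xs(1) by (simp add: paths_def)
  have "path_weight b (Suc k) (xs @ [j]) = path_weight b k xs * b l j"
  proof -
    have "(\<Prod>t<k. b ((xs @ [j]) ! t) ((xs @ [j]) ! Suc t)) = path_weight b k xs"
      unfolding path_weight_def using len by (intro prod.cong) (auto simp: nth_append)
    then show ?thesis
      using len xs(3) by (simp add: path_weight_def nth_append)
  qed
  then show ?case
    using xs len Suc.prems \<open>b l j > 0\<close>
    by (intro bexI[of _ "xs @ [j]"]) (auto simp: paths_def nth_append)
qed

lemma left_eigenvalue_pos: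
  fixes b :: "nat \<Rightarrow> nat \<Rightarrow> real"
  assumes "\<forall>i j. b i j \<ge> 0" "\<forall>i\<in>{1..n}. u i > 0" "j \<in> {1..n}"
    and "(\<Sum>i=1..n. b i j * u i) = lam * u j"
    and "mpow n b (Suc k) i j > 0"
  shows "lam > 0"
proof -
  obtain l where l: "l \<in> {1..n}" "b l j > 0"
    using mpow_Suc_pos_imp_edge[OF assms(1,5)] by blast
  have "u j > 0"
    using assms(2,3) by blast
  have "0 < b l j * u l"
    using assms(2) l by simp
  also have "\<dots> \<le> (\<Sum>i=1..n. b i j * u i)"
    using assms(1,2) l by (intro member_le_sum) (auto simp: less_imp_le)
  finally show ?thesis
    using assms(4) \<open>u j > 0\<close> by (simp add: zero_less_mult_iff)
qed

section \<open>Costs\<close>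

definition exp_neg :: "ereal \<Rightarrow> real" where
  "exp_neg c = (if c = \<infinity> then 0 else exp (- real_of_ereal c))"

lemma bmat_eq_exp_neg: "bmat U i j = exp_neg (U i j)"
  by (simp add: bmat_def exp_neg_def)

lemma bmat_nonneg: "bmat U i j \<ge> 0"
  by (simp add: bmat_def)

lemma exp_neg_add: "a \<ge> 0 \<Longrightarrow> b \<ge> 0 \<Longrightarrow> exp_neg (a + b) = exp_neg a * exp_neg b"
  by (cases a; cases b) (auto simp: exp_neg_def exp_add[symmetric])

lemma exp_neg_sum:
  "finite T \<Longrightarrow> \<forall>t\<in>T. c t \<ge> 0 \<Longrightarrow> exp_neg (\<Sum>t\<in>T. c t) = (\<Prod>t\<in>T. exp_neg (c t))"
proof (induction T rule: finite_induct)
  case empty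
  then show ?case
    by (simp add: exp_neg_def zero_ereal_def)
next
  case (insert x F)
  then show ?case
    by (simp add: exp_neg_add sum_nonneg)
qed

lemma exp_neg_nonneg: "exp_neg c \<ge> 0"
  by (simp add: exp_neg_def)

lemma exp_neg_antimono: "0 \<le> a \<Longrightarrow> a \<le> b \<Longrightarrow> exp_neg b \<le> exp_neg a"
  by (cases a; cases b) (auto simp: exp_neg_def)

lemma path_cost_nonneg:
  assumes "\<forall>i\<in>{1..n}. \<forall>j\<in>{1..n}. U i j \<ge> 0" "xs \<in> paths n N"
  shows "path_cost U N xs \<ge> 0"
  unfolding path_cost_def using assms paths_nth_in by (intro sum_nonneg) auto

lemma path_weight_bmat:
  assumes "\<forall>i\<in>{1..n}. \<forall>j\<in>{1..n}. U i j \<ge> 0" "xs \<in> paths n N"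
  shows "path_weight (bmat U) N xs = exp_neg (path_cost U N xs)"
  unfolding path_weight_def path_cost_def bmat_eq_exp_neg
  using assms paths_nth_in by (subst exp_neg_sum) auto

section \<open>Marginals and bridges\<close>

lemma marginal_point_mass_imp_zero:
  assumes "is_prob (paths n N) P" "marginal n N P t i = 1"
    and "xs \<in> paths n N" "xs ! t \<noteq> i"
  shows "P xs = 0"
proof -
  let ?S = "paths n N"
  have "(\<Sum>x\<in>?S. P x) = marginal n N P t i + (\<Sum>x\<in>{x\<in>?S. x ! t \<noteq> i}. P x)"
    unfolding marginal_def sum.inter_filter[OF finite_paths] sum.distrib[symmetric]
    by (rule sum.cong) auto
  then have "(\<Sum>x\<in>{x\<in>?S. x ! t \<noteq> i}. P x) = 0"
    using assms(1,2) by (simp add: is_prob_def)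
  then show ?thesis
    using assms(1,3,4) finite_paths by (subst (asm) sum_nonneg_eq_0_iff) (auto simp: is_prob_def)
qed

lemma marginal_concentrated:
  assumes "is_prob (paths n N) P" "\<forall>xs\<in>paths n N. xs ! t \<noteq> i \<longrightarrow> P xs = 0"
  shows "marginal n N P t j = (if j = i then 1 else 0)"
proof (cases "j = i")
  case True
  have "marginal n N P t j = (\<Sum>x\<in>paths n N. P x)"
    unfolding marginal_def using True assms(2) finite_paths by (intro sum.mono_neutral_left) auto
  then show ?thesis
    using True assms(1) by (simp add: is_prob_def)
qed (use assms(2) in \<open>auto simp: marginal_def\<close>)

definition bridges :: "nat \<Rightarrow> nat \<Rightarrow> nat \<Rightarrow> nat \<Rightarrow> nat list set" where
  "bridges n N i j = {xs \<in> paths n N. xs ! 0 = i \<and> xs ! N = j}"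

definition bridge_feasible :: "nat \<Rightarrow> nat \<Rightarrow> nat \<Rightarrow> nat \<Rightarrow> (nat list \<Rightarrow> real) \<Rightarrow> bool" where
  "bridge_feasible n N i j P \<longleftrightarrow> is_prob (paths n N) P
     \<and> (\<forall>k\<in>{1..n}. marginal n N P 0 k = (if k = i then 1 else 0))
     \<and> (\<forall>k\<in>{1..n}. marginal n N P N k = (if k = j then 1 else 0))"

lemma bridges_subset_paths: "bridges n N i j \<subseteq> paths n N"
  by (auto simp: bridges_def)

lemma bridge_feasible_vanishes:
  assumes "bridge_feasible n N i j P" "i \<in> {1..n}" "j \<in> {1..n}"
  shows "\<forall>xs\<in>paths n N - bridges n N i j. P xs = 0"
proof
  fix xs assume "xs \<in> paths n N - bridges n N i j"
  moreover have "is_prob (paths n N) P" "marginal n N P 0 i = 1" "marginal n N P N j = 1"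
    using assms by (auto simp: bridge_feasible_def)
  ultimately show "P xs = 0"
    using marginal_point_mass_imp_zero by (auto simp: bridges_def)
qed

lemma bridge_feasible_normalized:
  assumes "\<forall>xs\<in>bridges n N i j. w xs \<ge> 0" "sum w (bridges n N i j) > 0"
  shows "bridge_feasible n N i j
           (\<lambda>xs. if xs \<in> bridges n N i j then w xs / sum w (bridges n N i j) else 0)"
proof -
  have "is_prob (paths n N)
          (\<lambda>xs. if xs \<in> bridges n N i j then w xs / sum w (bridges n N i j) else 0)"
    using assms sum_normalized[OF finite_paths bridges_subset_paths] by (auto simp: is_prob_def)
  then show ?thesis
    unfolding bridge_feasible_def
    by (intro conjI ballI marginal_concentrated) (auto simp: bridges_def)
qed

lemma markov_meas_on_bridges:
  assumes "\<forall>k\<in>{1..n}. v k > 0" "xs \<in> bridges n N i j"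
  shows "markov_meas b lam u v N xs = u i * v j * inverse lam ^ N * path_weight b N xs"
proof -
  have "xs \<in> paths n N" "xs ! 0 = i" "xs ! N = j"
    using assms(2) by (auto simp: bridges_def)
  then show ?thesis
    using markov_meas_eq_path_weight assms(1) paths_nth_in by (simp add: less_imp_neq[symmetric])
qed

lemma bridges_path_weight_pos:
  assumes "\<forall>i j. b i j \<ge> 0" "i \<in> {1..n}" "j \<in> {1..n}" "mpow n b N i j > 0"
  shows "sum (path_weight b N) (bridges n N i j) > 0"
proof -
  obtain xs where "xs \<in> bridges n N i j" "path_weight b N xs > 0"
    using mpow_pos_imp_path[OF assms] unfolding bridges_def by blast
  then show ?thesis
    using finite_subset[OF bridges_subset_paths finite_paths] path_weight_nonneg[OF assms(1)]
    by (intro sum_pos2) auto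
qed

definition bridge_gibbs_law :: "(nat \<Rightarrow> nat \<Rightarrow> ereal) \<Rightarrow> nat \<Rightarrow> nat \<Rightarrow> nat \<Rightarrow> nat \<Rightarrow> nat list \<Rightarrow> real" where
  "bridge_gibbs_law U n N i j xs =
     (if xs \<in> bridges n N i j
      then exp_neg (path_cost U N xs) / (\<Sum>ys\<in>bridges n N i j. exp_neg (path_cost U N ys))
      else 0)"

lemma bridge_gibbs_law_cost:
  assumes "\<forall>i\<in>{1..n}. \<forall>j\<in>{1..n}. U i j \<ge> 0"
    and P_law: "\<forall>xs\<in>paths n N. P xs = bridge_gibbs_law U n N i j xs"
  shows "(\<forall>x\<in>paths n N. \<forall>y\<in>paths n N.
           x ! 0 = i \<and> x ! N = j \<and> y ! 0 = i \<and> y ! N = j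
           \<and> path_cost U N x = path_cost U N y \<longrightarrow> P x = P y)
         \<and> (\<forall>x\<in>paths n N. x ! 0 = i \<and> x ! N = j
              \<and> (\<forall>y\<in>paths n N. y ! 0 = i \<and> y ! N = j \<longrightarrow> path_cost U N x \<le> path_cost U N y)
              \<longrightarrow> (\<forall>y\<in>paths n N. P y \<le> P x))"
proof (intro conjI ballI impI)
  fix x y assume "x \<in> paths n N" "y \<in> paths n N"
    "x ! 0 = i \<and> x ! N = j \<and> y ! 0 = i \<and> y ! N = j \<and> path_cost U N x = path_cost U N y"
  then show "P x = P y"
    using P_law by (simp add: bridge_gibbs_law_def bridges_def)
next
  fix x y assume x: "x \<in> paths n N" "x ! 0 = i \<and> x ! N = j
      \<and> (\<forall>y\<in>paths n N. y ! 0 = i \<and> y ! N = j \<longrightarrow> path_cost U N x \<le> path_cost U N y)"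
    and y: "y \<in> paths n N"
  define Z where "Z = (\<Sum>ys\<in>bridges n N i j. exp_neg (path_cost U N ys))"
  have "Z \<ge> 0"
    unfolding Z_def by (intro sum_nonneg) (simp add: exp_neg_nonneg)
  have x_law: "P x = exp_neg (path_cost U N x) / Z"
    using x P_law by (simp add: bridge_gibbs_law_def bridges_def Z_def)
  show "P y \<le> P x"
  proof (cases "y \<in> bridges n N i j")
    case True
    then have "exp_neg (path_cost U N y) \<le> exp_neg (path_cost U N x)"
      using x y path_cost_nonneg[OF assms(1)] exp_neg_antimono by (simp add: bridges_def)
    then show ?thesis
      using True y P_law x_law \<open>Z \<ge> 0\<close> by (simp add: bridge_gibbs_law_def Z_def divide_right_mono)
  next
    case False
    then show ?thesis
      using y P_law x_law \<open>Z \<ge> 0\<close> exp_neg_nonneg by (simp add: bridge_gibbs_law_def)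
  qed
qed

lemma rel_entropy_minimizer_eq_bridge_gibbs_law:
  fixes U :: "nat \<Rightarrow> nat \<Rightarrow> ereal" and u v :: "nat \<Rightarrow> real" and lam :: real
  assumes U_nonneg: "\<forall>i\<in>{1..n}. \<forall>j\<in>{1..n}. U i j \<ge> 0"
    and ends: "i \<in> {1..n}" "j \<in> {1..n}"
    and "N \<ge> 1" and path_ij: "mpow n (bmat U) N i j > 0"
    and u_pos: "\<forall>k\<in>{1..n}. u k > 0" and v_pos: "\<forall>k\<in>{1..n}. v k > 0"
    and u_eig: "(\<Sum>k=1..n. bmat U k j * u k) = lam * u j"
    and P_feasible: "bridge_feasible n N i j P"
    and P_min: "\<forall>Q. bridge_feasible n N i j Q
                  \<longrightarrow> rel_entropy (paths n N) P (markov_meas (bmat U) lam u v N)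
                      \<le> rel_entropy (paths n N) Q (markov_meas (bmat U) lam u v N)"
  shows "\<forall>xs\<in>paths n N. P xs = bridge_gibbs_law U n N i j xs"
proof -
  let ?M = "markov_meas (bmat U) lam u v N"
  define A where "A = bridges n N i j"
  define w where "w = path_weight (bmat U) N"
  define Q where "Q = (\<lambda>xs. if xs \<in> A then w xs / sum w A else 0)"
  have b_nonneg: "\<forall>i j. bmat U i j \<ge> 0"
    by (simp add: bmat_nonneg)
  obtain k where "N = Suc k"
    using \<open>N \<ge> 1\<close> by (cases N) auto
  then have "lam > 0"
    using left_eigenvalue_pos[OF b_nonneg u_pos ends(2) u_eig] path_ij by blast
  then have c_pos: "u i * v j * inverse lam ^ N > 0"
    using u_pos v_pos ends by simp
  have M_on_A: "\<forall>xs\<in>A. ?M xs = u i * v j * inverse lam ^ N * w xs"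
    using markov_meas_on_bridges[OF v_pos] by (simp add: A_def w_def)
  have w_nonneg: "\<forall>xs\<in>A. w xs \<ge> 0"
    using path_weight_nonneg[OF b_nonneg] by (simp add: w_def)
  have Z_pos: "sum w A > 0"
    using bridges_path_weight_pos[OF b_nonneg ends path_ij] by (simp add: A_def w_def)
  have "bridge_feasible n N i j Q"
    using bridge_feasible_normalized w_nonneg Z_pos unfolding Q_def A_def by blast
  then have "rel_entropy (paths n N) P ?M \<le> rel_entropy (paths n N) Q ?M"
    using P_min by blast
  moreover have "A \<subseteq> paths n N" "\<forall>xs\<in>paths n N - A. P xs = 0"
    using bridges_subset_paths bridge_feasible_vanishes[OF P_feasible ends] by (simp_all add: A_def)
  ultimately have "\<forall>xs\<in>paths n N. P xs = Q xs"
    unfolding Q_def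
    using rel_entropy_minimizer_eq_normalized[OF finite_paths _ c_pos w_nonneg Z_pos M_on_A] P_feasible
    by (simp add: bridge_feasible_def is_prob_def)
  moreover have "w xs = exp_neg (path_cost U N xs)" if "xs \<in> A" for xs
    using that path_weight_bmat[OF U_nonneg] bridges_subset_paths[of n N i j]
    by (auto simp: A_def w_def)
  ultimately show ?thesis
    by (simp add: Q_def A_def bridge_gibbs_law_def cong: sum.cong)
qed

theorem theorem6p1:
  fixes n N :: nat and U :: "nat \<Rightarrow> nat \<Rightarrow> ereal"
    and u v :: "nat \<Rightarrow> real" and P :: "nat list \<Rightarrow> real"
  assumes n1: "n \<ge> 1"
    and U_nonneg: "\<forall>i\<in>{1..n}. \<forall>j\<in>{1..n}. U i j \<ge> 0"
    and N1: "N \<ge> 1"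
    and prim: "\<forall>i\<in>{1..n}. \<forall>j\<in>{1..n}. mpow n (bmat U) N i j > 0"
    and u_pos: "\<forall>i\<in>{1..n}. u i > 0"
    and v_pos: "\<forall>i\<in>{1..n}. v i > 0"
    and u_eig: "\<forall>j\<in>{1..n}. (\<Sum>i=1..n. bmat U i j * u i)
                   = spectral_radius (Bmat_c n (bmat U)) * u j"
    and v_eig: "\<forall>i\<in>{1..n}. (\<Sum>j=1..n. bmat U i j * v j)
                   = spectral_radius (Bmat_c n (bmat U)) * v i"
    and uv_norm: "(\<Sum>i=1..n. u i * v i) = 1"
    and P_feas: "is_prob (paths n N) P
                 \<and> (\<forall>i\<in>{1..n}. marginal n N P 0 i = (if i = 1 then 1 else 0))
                 \<and> (\<forall>i\<in>{1..n}. marginal n N P N i = (if i = n then 1 else 0))"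
    and P_min: "\<forall>Q. is_prob (paths n N) Q
                 \<and> (\<forall>i\<in>{1..n}. marginal n N Q 0 i = (if i = 1 then 1 else 0))
                 \<and> (\<forall>i\<in>{1..n}. marginal n N Q N i = (if i = n then 1 else 0))
                 \<longrightarrow> rel_entropy (paths n N) P
                       (markov_meas (bmat U) (spectral_radius (Bmat_c n (bmat U))) u v N)
                     \<le> rel_entropy (paths n N) Q
                       (markov_meas (bmat U) (spectral_radius (Bmat_c n (bmat U))) u v N)"
  shows "(\<forall>x\<in>paths n N. \<forall>y\<in>paths n N.
           x ! 0 = 1 \<and> x ! N = n \<and> y ! 0 = 1 \<and> y ! N = n
           \<and> path_cost U N x = path_cost U N y \<longrightarrow> P x = P y)
         \<and> (\<forall>x\<in>paths n N. x ! 0 = 1 \<and> x ! N = n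
              \<and> (\<forall>y\<in>paths n N. y ! 0 = 1 \<and> y ! N = n \<longrightarrow> path_cost U N x \<le> path_cost U N y)
              \<longrightarrow> (\<forall>y\<in>paths n N. P y \<le> P x))"
proof -
  let ?lam = "spectral_radius (Bmat_c n (bmat U))"
  let ?M = "markov_meas (bmat U) ?lam u v N"
  have ends: "1 \<in> {1..n}" "n \<in> {1..n}"
    using n1 by auto
  have "bridge_feasible n N 1 n P"
    unfolding bridge_feasible_def by (fact P_feas)
  moreover have "\<forall>Q. bridge_feasible n N 1 n Q
                   \<longrightarrow> rel_entropy (paths n N) P ?M \<le> rel_entropy (paths n N) Q ?M"
    unfolding bridge_feasible_def by (fact P_min)
  ultimately have "\<forall>xs\<in>paths n N. P xs = bridge_gibbs_law U n N 1 n xs"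
    using prim u_eig ends
    by (intro rel_entropy_minimizer_eq_bridge_gibbs_law[OF U_nonneg ends N1 _ u_pos v_pos]) auto
  then show ?thesis
    by (rule bridge_gibbs_law_cost[OF U_nonneg])
qed

end
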